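(* Every deterministic probabilistic automaton is leaktight.
   Context: Fix a finite alphabet $A$. A probabilistic automaton is $\mathcal{A}=(Q,q_0,\Delta,F)$ with $Q$ finite, $q_0\in Q$, $F\subseteq Q$, $\Delta:Q\times A\to\mathcal{D}(Q)$. It is deterministic if every $\Delta(q,a)$ assigns probability $1$ to a single state. For $a\in A$ let $M_a(s,t)=\Delta(s,a)(t)$, for $u=a_0\cdots a_{n-1}$ let $M_u=M_{a_0}\cdots M_{a_{n-1}}$ (identity for the empty word), and $\mathbb{P}_{\mathcal{A}}(s\xrightarrow{u}t)=M_u(s,t)$. A nonnegative $Q\times Q$ matrix $M$ is idempotent if $M(s,t)>0\iff M^2(s,t)>0$ for all $s,t$; a word $u$ is idempotent if $M_u$ is. A leak is a sequence $(u_n)$ of idempotent words such that $M_{u_n}$ converges to an idempotent matrix $M$ and there exist states $r,q$, both recurrent in the Markov chain with transition matrix $M$, with $\lim_n\mathbb{P}_{\mathcal{A}}(r\xrightarrow{u_n}q)=0$ and $\mathbb{P}_{\mathcal{A}}(r\xrightarrow{u_n}q)>0$ for all $n$. $\mathcal{A}$ is leaktight if it has no leak. *)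

theory Defs
  imports "HOL-Probability.Probability"
begin

definition mat_mult :: "('s::finite \<Rightarrow> 's \<Rightarrow> real) \<Rightarrow> ('s \<Rightarrow> 's \<Rightarrow> real) \<Rightarrow> 's \<Rightarrow> 's \<Rightarrow> real" where
  "mat_mult M N = (\<lambda>s t. \<Sum>u\<in>UNIV. M s u * N u t)"

definition mat_id :: "'s \<Rightarrow> 's \<Rightarrow> real" where
  "mat_id = (\<lambda>s t. if s = t then 1 else 0)"

definition letter_mat :: "('s \<Rightarrow> 'a \<Rightarrow> 's pmf) \<Rightarrow> 'a \<Rightarrow> 's \<Rightarrow> 's \<Rightarrow> real" where
  "letter_mat Delta a = (\<lambda>s t. pmf (Delta s a) t)"

fun word_mat :: "('s::finite \<Rightarrow> 'a \<Rightarrow> 's pmf) \<Rightarrow> 'a list \<Rightarrow> 's \<Rightarrow> 's \<Rightarrow> real" where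
  "word_mat Delta [] = mat_id"
| "word_mat Delta (a # w) = mat_mult (letter_mat Delta a) (word_mat Delta w)"

definition deterministic :: "('s \<Rightarrow> 'a \<Rightarrow> 's pmf) \<Rightarrow> bool" where
  "deterministic Delta \<longleftrightarrow> (\<forall>q a. \<exists>t. Delta q a = return_pmf t)"

definition idempotent_mat :: "('s::finite \<Rightarrow> 's \<Rightarrow> real) \<Rightarrow> bool" where
  "idempotent_mat M \<longleftrightarrow> (\<forall>s t. M s t > 0 \<longleftrightarrow> mat_mult M M s t > 0)"

text \<open>Recurrence of a state in the finite Markov chain with transition matrix M:
  every state reachable from r can reach r back (finite-chain characterisation).\<close>
definition recurrent :: "('s \<Rightarrow> 's \<Rightarrow> real) \<Rightarrow> 's \<Rightarrow> bool" where
  "recurrent M r \<longleftrightarrow>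
     (\<forall>t. (r, t) \<in> {(x, y). M x y > 0}\<^sup>* \<longrightarrow> (t, r) \<in> {(x, y). M x y > 0}\<^sup>*)"

definition is_leak :: "('s::finite \<Rightarrow> 'a \<Rightarrow> 's pmf) \<Rightarrow> (nat \<Rightarrow> 'a list) \<Rightarrow> bool" where
  "is_leak Delta u \<longleftrightarrow>
     (\<forall>n. idempotent_mat (word_mat Delta (u n))) \<and>
     (\<exists>M. (\<forall>s t. (\<lambda>n. word_mat Delta (u n) s t) \<longlonglongrightarrow> M s t) \<and>
          idempotent_mat M \<and>
          (\<exists>r q. recurrent M r \<and> recurrent M q \<and>
                 (\<lambda>n. word_mat Delta (u n) r q) \<longlonglongrightarrow> 0 \<and>
                 (\<forall>n. word_mat Delta (u n) r q > 0)))"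

definition leaktight :: "'s::finite \<Rightarrow> ('s \<Rightarrow> 'a::finite \<Rightarrow> 's pmf) \<Rightarrow> 's set \<Rightarrow> bool" where
  "leaktight q0 Delta F \<longleftrightarrow> \<not> (\<exists>u. is_leak Delta u)"

end

theory Submission
  imports Defs
begin

lemma word_mat_Cons_return_pmf:
  assumes "Delta s a = return_pmf x"
  shows "word_mat Delta (a # w) s t = word_mat Delta w x t"
  by (simp add: mat_mult_def letter_mat_def assms pmf_return indicator_def)

lemma word_mat_deterministic_zero_or_one:
  assumes "deterministic Delta"
  shows "word_mat Delta w s t = 0 \<or> word_mat Delta w s t = 1"
proof (induction w arbitrary: s)
  case Nil
  show ?case by (simp add: mat_id_def)
next
  case (Cons a w)
  from assms obtain x where "Delta s a = return_pmf x"
    unfolding deterministic_def by blast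
  with Cons.IH[of x] show ?case by (simp only: word_mat_Cons_return_pmf)
qed

lemma word_mat_deterministic_pos_eq_one:
  assumes "deterministic Delta" and "word_mat Delta w s t > 0"
  shows "word_mat Delta w s t = 1"
  using assms(2) word_mat_deterministic_zero_or_one[OF assms(1), of w s t] by linarith

theorem proposition4p2:
  fixes q0 :: "'s::finite" and Delta :: "'s \<Rightarrow> 'a::finite \<Rightarrow> 's pmf" and F :: "'s set"
  assumes "deterministic Delta"
  shows "leaktight q0 Delta F"
  unfolding leaktight_def
proof
  assume "\<exists>u. is_leak Delta u"
  then obtain u r q where to_zero: "(\<lambda>n. word_mat Delta (u n) r q) \<longlonglongrightarrow> 0"
    and pos: "\<And>n. word_mat Delta (u n) r q > 0"
    unfolding is_leak_def by blast
  have "(\<lambda>n. word_mat Delta (u n) r q) = (\<lambda>n. 1)"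
    using word_mat_deterministic_pos_eq_one[OF assms pos] by simp
  with to_zero have "(\<lambda>n. 1 :: real) \<longlonglongrightarrow> 0" by simp
  then show False
    using LIMSEQ_unique tendsto_const by fastforce
qed

end
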